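(* Let $g$ be a nonnegative function on $\mathbb{R}^3$ with $$\int_{\mathbb{R}^3} g\,dv=1,\quad \int_{\mathbb{R}^3} g(v)v_i\,dv=0\ (i=1,2,3),\quad\int_{\mathbb{R}^3} g(v)|v|^2\,dv=3.$$ Suppose that $|\hat g(\xi)|\leq K_1e^{-K_2\varphi(|\xi|)}$ for all $\xi\in\mathbb{R}^3$, where $K_1\geq1$, $K_2>0$ and $\varphi:[0,+\infty)\to[0,+\infty)$ satisfies $\lim_{t\to+\infty}\varphi(t)=+\infty$. Then there exists $\eta>0$ such that for every $R>\eta$ there exists $K>0$ (depending on $R$) with $$|\hat g(\xi)|\leq e^{-K|\xi|^2}\ \text{ for }|\xi|<R,\qquad |\hat g(\xi)|\leq e^{-K\varphi(|\xi|)}\ \text{ for }|\xi|\geq R.$$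
   Context: $\hat g(\xi)=\int_{\mathbb{R}^3} g(v)e^{-i\xi\cdot v}dv$. *)

theory Defs
  imports "HOL-Analysis.Analysis"
begin

definition fourier3 :: "(real^3 \<Rightarrow> real) \<Rightarrow> real^3 \<Rightarrow> complex" where
  "fourier3 g \<xi> = (LINT v|lborel. complex_of_real (g v) * exp (- \<i> * complex_of_real (\<xi> \<bullet> v)))"

end

theory Submission
  imports Defs
begin

text \<open>
  Write \<open>C(\<xi>)\<close> and \<open>S(\<xi>)\<close> for the integrals of \<open>g(v) cos(\<xi>\<cdot>v)\<close> and
  \<open>g(v) sin(\<xi>\<cdot>v)\<close>, so that \<open>|\<hat>g|\<^sup>2 = C\<^sup>2 + S\<^sup>2\<close>. Near the origin the moment
  conditions give \<open>S = O(|\<xi>|\<^sup>2)\<close> and \<open>C \<le> 1 - c|\<xi>|\<^sup>2\<close>; the constant \<open>c\<close> comes from the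
  second moment of \<open>g\<close> truncated to a ball, a positive definite quadratic form because
  \<open>g\<close> is not carried by a hyperplane. Hence \<open>|\<hat>g(\<xi>)|\<^sup>2 \<le> 1 - c|\<xi>|\<^sup>2\<close> for small \<open>\<xi>\<close>.
  Away from the origin, \<open>|\<hat>g| < 1\<close> because equality would force \<open>g\<close> to live on countably
  many parallel hyperplanes, so by continuity and compactness \<open>|\<hat>g|\<close> is bounded by some
  \<open>m < 1\<close> on every annulus; this yields the Gaussian bound on each ball. For large \<open>|\<xi>|\<close>,
  \<open>\<phi> \<rightarrow> \<infinity>\<close> lets half of the decay rate \<open>K\<^sub>2\<close> absorb the constant \<open>K\<^sub>1\<close>.
\<close>

lemma cos_eq_1_minus_sin_half: "cos x = 1 - 2 * (sin (x / 2))\<^sup>2" for x :: real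
  using cos_double_cos[of "x / 2"] sin_squared_eq[of "x / 2"] by simp

lemma one_minus_cos_le: "1 - cos x \<le> x\<^sup>2 / 2" for x :: real
proof -
  have "\<bar>sin (x / 2)\<bar>\<^sup>2 \<le> \<bar>x / 2\<bar>\<^sup>2"
    by (intro power_mono abs_sin_x_le_abs_x) simp
  then show ?thesis by (simp add: cos_eq_1_minus_sin_half power_divide)
qed

lemma one_minus_cos_ge:
  fixes x :: real
  assumes "\<bar>x\<bar> \<le> 1"
  shows "x\<^sup>2 / 4 \<le> 1 - cos x"
proof -
  define y where "y = \<bar>x / 2\<bar>"
  have y: "0 \<le> y" "y \<le> 1/2" using assms by (auto simp: y_def)
  have "\<bar>sin y - y\<bar> \<le> y ^ 3 / 6"
    using Maclaurin_sin_bound[of y 3] y by (simp add: sin_coeff_def eval_nat_numeral)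
  moreover have "y ^ 3 / 6 \<le> y / 24"
  proof -
    have "y\<^sup>2 \<le> (1/2)\<^sup>2" using y by (intro power_mono) auto
    then have "y * y\<^sup>2 \<le> y * (1/2)\<^sup>2" using y by (intro mult_left_mono)
    then show ?thesis by (simp add: power3_eq_cube power2_eq_square)
  qed
  ultimately have "3 / 4 * y \<le> sin y" by linarith
  then have "(3 / 4 * y)\<^sup>2 \<le> (sin y)\<^sup>2" using y by (intro power_mono) auto
  moreover have "(sin y)\<^sup>2 = (sin (x / 2))\<^sup>2" by (simp add: y_def abs_if)
  ultimately have "9 * x\<^sup>2 \<le> 64 * (sin (x / 2))\<^sup>2"
    by (simp add: y_def power_mult_distrib power_divide)
  then show ?thesis
    unfolding cos_eq_1_minus_sin_half using zero_le_power2[of x] by linarith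
qed

lemma abs_sin_minus_le: "\<bar>sin x - x\<bar> \<le> x\<^sup>2 / 2" for x :: real
proof -
  have "(\<Sum>m<2. sin_coeff m * x ^ m) = x" by (simp add: sin_coeff_def eval_nat_numeral)
  then show ?thesis using Maclaurin_sin_bound[of x 2] by (simp add: field_simps)
qed

lemma inner_square_le: "(x \<bullet> y)\<^sup>2 \<le> (norm x)\<^sup>2 * (norm y)\<^sup>2" for x y :: "'a::real_inner"
  by (metis Cauchy_Schwarz_ineq2 abs_ge_zero power2_abs power_mono power_mult_distrib)

lemma continuous_on_parametric_integral:
  fixes K :: "'a::metric_space \<Rightarrow> 'b \<Rightarrow> 'c::{banach, second_countable_topology}"
  assumes meas: "\<And>t. t \<in> A \<Longrightarrow> K t \<in> borel_measurable M"
    and "integrable M w"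
    and bound: "\<And>t x. t \<in> A \<Longrightarrow> x \<in> space M \<Longrightarrow> norm (K t x) \<le> w x"
    and cont: "\<And>x. x \<in> space M \<Longrightarrow> continuous_on A (\<lambda>t. K t x)"
  shows "continuous_on A (\<lambda>t. LINT x|M. K t x)"
proof (rule continuous_on_sequentiallyI)
  fix u a assume u: "\<forall>n. u n \<in> A" and "a \<in> A" and "u \<longlonglongrightarrow> a"
  show "(\<lambda>n. LINT x|M. K (u n) x) \<longlonglongrightarrow> (LINT x|M. K a x)"
  proof (rule integral_dominated_convergence)
    show "AE x in M. (\<lambda>n. K (u n) x) \<longlonglongrightarrow> K a x"
    proof (rule AE_I2)
      fix x assume "x \<in> space M"
      show "(\<lambda>n. K (u n) x) \<longlonglongrightarrow> K a x"
        by (rule continuous_on_tendsto_compose[OF cont[OF \<open>x \<in> space M\<close>] \<open>u \<longlonglongrightarrow> a\<close> \<open>a \<in> A\<close>])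
          (simp add: u)
    qed
    show "AE x in M. norm (K (u n) x) \<le> w x" for n
      using bound u by (simp add: AE_I2)
    show "K a \<in> borel_measurable M" "K (u n) \<in> borel_measurable M" for n
      using meas u \<open>a \<in> A\<close> by simp_all
  qed fact
qed

lemma null_sets_lborel_hyperplane:
  fixes a :: "'a::euclidean_space"
  assumes "a \<noteq> 0"
  shows "{v. a \<bullet> v = b} \<in> null_sets lborel"
proof -
  have "{v. a \<bullet> v = b} \<in> null_sets lebesgue"
    using negligible_hyperplane assms negligible_iff_null_sets by blast
  moreover have "{v. a \<bullet> v = b} \<in> sets lborel"
    by measurable
  ultimately show ?thesis
    using null_sets_completion_iff by blast
qed

lemma compact_continuous_less_imp_bound:
  fixes f :: "'a::topological_space \<Rightarrow> real"
  assumes "compact S" "continuous_on S f" "\<And>x. x \<in> S \<Longrightarrow> f x < c"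
  shows "\<exists>m<c. \<forall>x\<in>S. f x \<le> m"
proof (cases "S = {}")
  case True
  then show ?thesis by (intro exI[of _ "c - 1"]) auto
next
  case False
  obtain x0 where "x0 \<in> S" "\<And>x. x \<in> S \<Longrightarrow> f x \<le> f x0"
    using continuous_attains_sup[OF assms(1) False assms(2)] by blast
  then show ?thesis using assms(3) by blast
qed

lemma gaussian_bound_on_ball:
  fixes F :: "'a::euclidean_space \<Rightarrow> real"
  assumes cont: "continuous_on UNIV F"
    and less_1: "\<And>\<xi>. \<xi> \<noteq> 0 \<Longrightarrow> F \<xi> < 1"
    and "\<delta> > 0" "c > 0"
    and near_0: "\<And>\<xi>. norm \<xi> \<le> \<delta> \<Longrightarrow> F \<xi> \<le> exp (- c * (norm \<xi>)\<^sup>2)"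
    and "R > 0"
  shows "\<exists>K>0. \<forall>\<xi>. norm \<xi> < R \<longrightarrow> F \<xi> \<le> exp (- K * (norm \<xi>)\<^sup>2)"
proof -
  have "\<exists>m<1. \<forall>\<xi>\<in>cball 0 R - ball 0 \<delta>. F \<xi> \<le> m"
    using \<open>\<delta> > 0\<close> by (intro compact_continuous_less_imp_bound compact_diff less_1
        continuous_on_subset[OF cont]) auto
  then obtain m where "m < 1" and m: "\<And>\<xi>. norm \<xi> \<le> R \<Longrightarrow> \<delta> \<le> norm \<xi> \<Longrightarrow> F \<xi> \<le> m"
    by auto
  define m' where "m' = max m (1/2)"
  have "0 < m'" "m' < 1"
    using \<open>m < 1\<close> by (auto simp: m'_def)
  define K where "K = min c (- ln m' / R\<^sup>2)"
  have "K > 0"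
    using \<open>0 < m'\<close> \<open>m' < 1\<close> \<open>c > 0\<close> \<open>R > 0\<close> by (simp add: K_def divide_neg_pos)
  have "F \<xi> \<le> exp (- K * (norm \<xi>)\<^sup>2)" if "norm \<xi> < R" for \<xi>
  proof (cases "norm \<xi> \<le> \<delta>")
    case True
    have "F \<xi> \<le> exp (- c * (norm \<xi>)\<^sup>2)"
      by (rule near_0[OF True])
    also have "\<dots> \<le> exp (- K * (norm \<xi>)\<^sup>2)"
      by (simp add: K_def mult_right_mono)
    finally show ?thesis .
  next
    case False
    have "K * (norm \<xi>)\<^sup>2 \<le> (- ln m' / R\<^sup>2) * R\<^sup>2"
      using \<open>K > 0\<close> that by (intro mult_mono power_mono) (auto simp: K_def)
    then have "ln m' \<le> - K * (norm \<xi>)\<^sup>2"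
      using \<open>R > 0\<close> by simp
    then have "m' \<le> exp (- K * (norm \<xi>)\<^sup>2)"
      using \<open>0 < m'\<close> by (metis exp_le_cancel_iff exp_ln)
    moreover have "F \<xi> \<le> m'"
      using m[of \<xi>] False that by (auto simp: m'_def)
    ultimately show ?thesis by linarith
  qed
  then show ?thesis using \<open>K > 0\<close> by blast
qed

lemma eventually_mult_exp_le_exp_half:
  fixes \<phi> :: "real \<Rightarrow> real"
  assumes "K1 > 0" "K2 > 0" "filterlim \<phi> at_top at_top"
  shows "\<forall>\<^sub>F t in at_top. K1 * exp (- K2 * \<phi> t) \<le> exp (- (K2 / 2) * \<phi> t)"
proof -
  have "\<forall>\<^sub>F t in at_top. 2 * ln K1 / K2 \<le> \<phi> t"
    using assms(3) by (simp add: filterlim_at_top)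
  then show ?thesis
  proof eventually_elim
    case (elim t)
    then have "ln K1 - K2 * \<phi> t \<le> - (K2 / 2) * \<phi> t"
      using \<open>K2 > 0\<close> by (simp add: field_simps)
    moreover have "K1 * exp (- K2 * \<phi> t) = exp (ln K1 - K2 * \<phi> t)"
      using \<open>K1 > 0\<close> by (simp add: exp_diff exp_minus field_simps)
    ultimately show ?case
      by simp
  qed
qed

lemma cball_in_borel [measurable]: "cball x r \<in> sets borel"
  by (simp add: borel_closed)

lemma sqrt_one_minus_le_exp_half: "sqrt (1 - x) \<le> exp (- x / 2)" for x :: real
proof -
  have "1 - x \<le> (exp (- x / 2))\<^sup>2"
    using exp_ge_add_one_self[of "- x"] by (simp add: power2_eq_square flip: exp_add)
  then show ?thesis
    using real_sqrt_le_mono by fastforce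
qed

definition cos_transform :: "('a::euclidean_space \<Rightarrow> real) \<Rightarrow> 'a \<Rightarrow> real" where
  "cos_transform g \<xi> = (LINT v|lborel. g v * cos (\<xi> \<bullet> v))"

definition sin_transform :: "('a::euclidean_space \<Rightarrow> real) \<Rightarrow> 'a \<Rightarrow> real" where
  "sin_transform g \<xi> = (LINT v|lborel. g v * sin (\<xi> \<bullet> v))"

text \<open>The truncation keeps \<open>|\<xi>\<cdot>v| \<le> 1\<close> for small \<open>\<xi>\<close>, where \<open>1 - cos t \<ge> t\<^sup>2/4\<close>;
  this is how the second moment alone controls \<open>1 - C(\<xi>)\<close> from below.\<close>

definition truncated_second_moment :: "('a::euclidean_space \<Rightarrow> real) \<Rightarrow> real \<Rightarrow> 'a \<Rightarrow> real" where
  "truncated_second_moment g \<rho> u = (LINT v|lborel. g v * indicator (cball 0 \<rho>) v * (u \<bullet> v)\<^sup>2)"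

lemma integrable_mult_bounded:
  fixes g f :: "'a \<Rightarrow> real"
  assumes "integrable M g" "f \<in> borel_measurable M" "\<And>x. \<bar>f x\<bar> \<le> 1"
  shows "integrable M (\<lambda>x. g x * f x)"
  using assms by (intro Bochner_Integration.integrable_bound[OF assms(1)])
    (auto simp: abs_mult intro!: mult_left_le)

lemma norm_fourier3:
  assumes "integrable lborel g"
  shows "norm (fourier3 g \<xi>) = sqrt ((cos_transform g \<xi>)\<^sup>2 + (sin_transform g \<xi>)\<^sup>2)"
proof -
  have g_meas[measurable]: "g \<in> borel_measurable lborel" using assms by blast
  define h where "h v = complex_of_real (g v) * exp (- \<i> * complex_of_real (\<xi> \<bullet> v))" for v
  have exp_eq: "exp (- (\<i> * complex_of_real x)) = cis (- x)" for x
    by (simp add: cis_conv_exp)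
  have h_eq: "h v = Complex (g v * cos (\<xi> \<bullet> v)) (- (g v * sin (\<xi> \<bullet> v)))" for v
    by (simp add: h_def exp_eq complex_eq_iff)
  have h_int: "integrable lborel h"
  proof (rule Bochner_Integration.integrable_bound[OF assms])
    show "h \<in> borel_measurable lborel"
      unfolding h_def[abs_def] by measurable
  qed (simp add: h_def norm_mult)
  have F: "fourier3 g \<xi> = (LINT v|lborel. h v)"
    unfolding fourier3_def h_def ..
  have "Re (fourier3 g \<xi>) = cos_transform g \<xi>"
    by (simp only: F integral_Re[OF h_int, symmetric]) (simp add: h_eq cos_transform_def)
  moreover have "Im (fourier3 g \<xi>) = - sin_transform g \<xi>"
    by (simp only: F integral_Im[OF h_int, symmetric]) (simp add: h_eq sin_transform_def)
  ultimately show ?thesis by (simp add: norm_complex_def)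
qed

locale prob_density =
  fixes g :: "'a::euclidean_space \<Rightarrow> real"
  assumes nonneg: "\<And>v. 0 \<le> g v"
    and integrable_density: "integrable lborel g"
    and total_mass: "(LINT v|lborel. g v) = 1"
begin

lemma borel_measurable_density [measurable]: "g \<in> borel_measurable lborel"
  using integrable_density by blast

lemma integrable_cos: "integrable lborel (\<lambda>v. g v * cos (\<xi> \<bullet> v))"
  by (rule integrable_mult_bounded[OF integrable_density]) auto

lemma integrable_sin: "integrable lborel (\<lambda>v. g v * sin (\<xi> \<bullet> v))"
  by (rule integrable_mult_bounded[OF integrable_density]) auto

lemma continuous_cos_transform: "continuous_on UNIV (cos_transform g)"
  unfolding cos_transform_def[abs_def]
  by (rule continuous_on_parametric_integral[where w = g])
    (auto simp: integrable_density abs_mult nonneg intro!: mult_left_le continuous_intros)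

lemma continuous_sin_transform: "continuous_on UNIV (sin_transform g)"
  unfolding sin_transform_def[abs_def]
  by (rule continuous_on_parametric_integral[where w = g])
    (auto simp: integrable_density abs_mult nonneg intro!: mult_left_le continuous_intros)

lemma cos_sin_transform_rotate:
  "cos_transform g \<xi> * cos \<theta> + sin_transform g \<xi> * sin \<theta> =
     1 - (LINT v|lborel. g v * (1 - cos (\<xi> \<bullet> v - \<theta>)))"
proof -
  have "(LINT v|lborel. g v * (1 - cos (\<xi> \<bullet> v - \<theta>))) =
      (LINT v|lborel. g v - (cos \<theta> * (g v * cos (\<xi> \<bullet> v)) + sin \<theta> * (g v * sin (\<xi> \<bullet> v))))"
    by (simp add: cos_diff algebra_simps)
  also have "\<dots> = 1 - (cos \<theta> * cos_transform g \<xi> + sin \<theta> * sin_transform g \<xi>)"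
    using integrable_density integrable_cos integrable_sin total_mass
    by (simp add: cos_transform_def sin_transform_def)
  finally show ?thesis by (simp add: mult.commute)
qed

lemma integral_one_minus_cos_pos:
  assumes "\<xi> \<noteq> 0"
  shows "0 < (LINT v|lborel. g v * (1 - cos (\<xi> \<bullet> v - \<theta>)))"
proof -
  let ?h = "\<lambda>v. g v * (1 - cos (\<xi> \<bullet> v - \<theta>))"
  have h_int: "integrable lborel ?h"
    using integrable_density integrable_mult_bounded[OF integrable_density, of "\<lambda>v. cos (\<xi> \<bullet> v - \<theta>)"]
    by (simp add: right_diff_distrib)
  have h_nonneg: "0 \<le> ?h v" for v
    by (simp add: nonneg)
  have "(LINT v|lborel. ?h v) \<noteq> 0"
  proof
    assume "(LINT v|lborel. ?h v) = 0"
    then have "AE v in lborel. ?h v = 0"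
      using integral_nonneg_eq_0_iff_AE[OF h_int] h_nonneg by simp
    moreover have "AE v in lborel. v \<notin> (\<Union>n::int. {v. \<xi> \<bullet> v = \<theta> + n * 2 * pi})"
      by (intro AE_not_in null_sets_UN null_sets_lborel_hyperplane assms)
    ultimately have "AE v in lborel. g v = 0"
      by eventually_elim (auto simp: cos_one_2pi_int algebra_simps)
    then have "(LINT v|lborel. g v) = 0"
      by (rule integral_eq_zero_AE)
    with total_mass show False by simp
  qed
  moreover have "0 \<le> (LINT v|lborel. ?h v)"
    using h_nonneg by simp
  ultimately show ?thesis
    by linarith
qed

lemma cos_sin_transform_sq_less_1:
  assumes "\<xi> \<noteq> 0"
  shows "(cos_transform g \<xi>)\<^sup>2 + (sin_transform g \<xi>)\<^sup>2 < 1"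
proof -
  define r where "r = sqrt ((cos_transform g \<xi>)\<^sup>2 + (sin_transform g \<xi>)\<^sup>2)"
  have "r < 1"
  proof (cases "r = 0")
    case False
    then have "(cos_transform g \<xi> / r)\<^sup>2 + (sin_transform g \<xi> / r)\<^sup>2 = 1"
      by (simp add: r_def power_divide add_divide_distrib[symmetric])
    then obtain \<theta> where "cos_transform g \<xi> = r * cos \<theta>" "sin_transform g \<xi> = r * sin \<theta>"
      using False by (metis sincos_total_2pi nonzero_mult_div_cancel_left times_divide_eq_right)
    then have "r = cos_transform g \<xi> * cos \<theta> + sin_transform g \<xi> * sin \<theta>"
      by (simp add: algebra_simps flip: distrib_left power2_eq_square)
    then show ?thesis
      using cos_sin_transform_rotate integral_one_minus_cos_pos[OF assms] by simp
  qed simp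
  then show ?thesis
    by (simp add: r_def)
qed

lemma integrable_truncated_second_moment:
  "integrable lborel (\<lambda>v. g v * indicator (cball 0 \<rho>) v * (u \<bullet> v)\<^sup>2)"
proof (rule Bochner_Integration.integrable_bound)
  show "integrable lborel (\<lambda>v. g v * ((norm u)\<^sup>2 * \<rho>\<^sup>2))"
    using integrable_density by simp
  have "(u \<bullet> v)\<^sup>2 \<le> (norm u)\<^sup>2 * \<rho>\<^sup>2" if "v \<in> cball 0 \<rho>" for v
  proof -
    have "(norm v)\<^sup>2 \<le> \<rho>\<^sup>2"
      using that by (intro power_mono) auto
    then show ?thesis
      using inner_square_le[of u v] by (meson mult_left_mono order_trans zero_le_power2)
  qed
  then show "AE v in lborel. norm (g v * indicator (cball 0 \<rho>) v * (u \<bullet> v)\<^sup>2) \<le>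
      norm (g v * ((norm u)\<^sup>2 * \<rho>\<^sup>2))"
    by (intro AE_I2) (auto simp: indicator_def abs_mult nonneg intro!: mult_left_mono)
qed measurable

lemma truncated_second_moment_scaleR:
  "truncated_second_moment g \<rho> (c *\<^sub>R u) = c\<^sup>2 * truncated_second_moment g \<rho> u"
proof -
  have "(\<lambda>v. g v * indicator (cball 0 \<rho>) v * ((c *\<^sub>R u) \<bullet> v)\<^sup>2) =
      (\<lambda>v. c\<^sup>2 * (g v * indicator (cball 0 \<rho>) v * (u \<bullet> v)\<^sup>2))"
    by (simp add: fun_eq_iff power_mult_distrib)
  then show ?thesis
    by (simp add: truncated_second_moment_def)
qed

lemma truncated_second_moment_pos:
  assumes "0 < (LINT v|lborel. g v * indicator (cball 0 \<rho>) v)" and "u \<noteq> 0"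
  shows "0 < truncated_second_moment g \<rho> u"
proof -
  have integrand_nonneg: "0 \<le> g v * indicator (cball 0 \<rho>) v * (u \<bullet> v)\<^sup>2" for v
    by (simp add: nonneg)
  have "truncated_second_moment g \<rho> u \<noteq> 0"
  proof
    assume "truncated_second_moment g \<rho> u = 0"
    then have "AE v in lborel. g v * indicator (cball 0 \<rho>) v * (u \<bullet> v)\<^sup>2 = 0"
      unfolding truncated_second_moment_def
      using integral_nonneg_eq_0_iff_AE[OF integrable_truncated_second_moment] integrand_nonneg by simp
    moreover have "AE v in lborel. v \<notin> {v. u \<bullet> v = 0}"
      by (intro AE_not_in null_sets_lborel_hyperplane \<open>u \<noteq> 0\<close>)
    ultimately have "AE v in lborel. g v * indicator (cball 0 \<rho>) v = 0"
      by eventually_elim auto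
    then have "(LINT v|lborel. g v * indicator (cball 0 \<rho>) v) = 0"
      by (rule integral_eq_zero_AE)
    with assms(1) show False by simp
  qed
  moreover have "0 \<le> truncated_second_moment g \<rho> u"
    unfolding truncated_second_moment_def using integrand_nonneg by simp
  ultimately show ?thesis by linarith
qed

lemma continuous_truncated_second_moment:
  "continuous_on (sphere 0 1) (truncated_second_moment g \<rho>)"
  unfolding truncated_second_moment_def[abs_def]
proof (rule continuous_on_parametric_integral[where w = "\<lambda>v. g v * \<rho>\<^sup>2"])
  show "integrable lborel (\<lambda>v. g v * \<rho>\<^sup>2)"
    using integrable_density by simp
  fix u v :: 'a
  assume "u \<in> sphere 0 1"
  have "(u \<bullet> v)\<^sup>2 \<le> \<rho>\<^sup>2" if "v \<in> cball 0 \<rho>"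
  proof -
    have "(norm v)\<^sup>2 \<le> \<rho>\<^sup>2"
      using that by (intro power_mono) auto
    then show ?thesis
      using inner_square_le[of u v] \<open>u \<in> sphere 0 1\<close> by simp
  qed
  then show "norm (g v * indicator (cball 0 \<rho>) v * (u \<bullet> v)\<^sup>2) \<le> g v * \<rho>\<^sup>2"
    by (auto simp: indicator_def abs_mult nonneg intro!: mult_left_mono)
qed (auto intro!: continuous_intros)

lemma truncated_second_moment_ge:
  assumes "0 < (LINT v|lborel. g v * indicator (cball 0 \<rho>) v)"
  shows "\<exists>p>0. \<forall>u. p * (norm u)\<^sup>2 \<le> truncated_second_moment g \<rho> u"
proof -
  obtain u0 where u0: "u0 \<in> sphere 0 1"
    and min: "\<And>u. u \<in> sphere 0 1 \<Longrightarrow> truncated_second_moment g \<rho> u0 \<le> truncated_second_moment g \<rho> u"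
    using continuous_attains_inf[OF compact_sphere _ continuous_truncated_second_moment[of \<rho>]]
    by auto
  have "truncated_second_moment g \<rho> u0 * (norm u)\<^sup>2 \<le> truncated_second_moment g \<rho> u" for u
  proof (cases "u = 0")
    case False
    have "u = norm u *\<^sub>R (u /\<^sub>R norm u)"
      using False by simp
    then have "truncated_second_moment g \<rho> u = (norm u)\<^sup>2 * truncated_second_moment g \<rho> (u /\<^sub>R norm u)"
      by (metis truncated_second_moment_scaleR)
    moreover have "truncated_second_moment g \<rho> u0 \<le> truncated_second_moment g \<rho> (u /\<^sub>R norm u)"
      using False by (intro min) simp
    ultimately show ?thesis
      by (metis mult.commute mult_left_mono zero_le_power2)
  qed (simp add: truncated_second_moment_def)
  moreover have "0 < truncated_second_moment g \<rho> u0"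
    using u0 by (intro truncated_second_moment_pos assms) auto
  ultimately show ?thesis by blast
qed

lemma cos_transform_le:
  assumes "norm \<xi> * \<rho> \<le> 1"
  shows "cos_transform g \<xi> \<le> 1 - truncated_second_moment g \<rho> \<xi> / 4"
proof -
  have "(LINT v|lborel. g v * indicator (cball 0 \<rho>) v * (\<xi> \<bullet> v)\<^sup>2 / 4) \<le>
      (LINT v|lborel. g v * (1 - cos (\<xi> \<bullet> v)))"
  proof (rule integral_mono)
    show "integrable lborel (\<lambda>v. g v * indicator (cball 0 \<rho>) v * (\<xi> \<bullet> v)\<^sup>2 / 4)"
      using integrable_truncated_second_moment by simp
    show "integrable lborel (\<lambda>v. g v * (1 - cos (\<xi> \<bullet> v)))"
      using integrable_density integrable_cos by (simp add: right_diff_distrib)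
    fix v :: 'a
    show "g v * indicator (cball 0 \<rho>) v * (\<xi> \<bullet> v)\<^sup>2 / 4 \<le> g v * (1 - cos (\<xi> \<bullet> v))"
    proof (cases "v \<in> cball 0 \<rho>")
      case True
      have "(\<xi> \<bullet> v)\<^sup>2 / 4 \<le> 1 - cos (\<xi> \<bullet> v)"
      proof (rule one_minus_cos_ge)
        have "\<bar>\<xi> \<bullet> v\<bar> \<le> norm \<xi> * norm v"
          by (rule Cauchy_Schwarz_ineq2)
        also have "\<dots> \<le> norm \<xi> * \<rho>"
          using True by (intro mult_left_mono) auto
        finally show "\<bar>\<xi> \<bullet> v\<bar> \<le> 1"
          using assms by linarith
      qed
      from mult_left_mono[OF this nonneg[of v]] True show ?thesis
        by simp
    qed (simp add: nonneg)
  qed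
  then show ?thesis
    using integrable_density integrable_cos total_mass
    by (simp add: truncated_second_moment_def cos_transform_def right_diff_distrib)
qed

end

locale centred_density = prob_density +
  fixes m2 :: real
  assumes integrable_second_moment: "integrable lborel (\<lambda>v. g v * (norm v)\<^sup>2)"
    and second_moment: "(LINT v|lborel. g v * (norm v)\<^sup>2) = m2"
    and mean_zero: "\<And>u. (LINT v|lborel. g v * (u \<bullet> v)) = 0"
begin

lemma second_moment_nonneg: "0 \<le> m2"
  unfolding second_moment[symmetric] by (simp add: nonneg)

lemma integrable_first_moment: "integrable lborel (\<lambda>v. g v * (u \<bullet> v))"
proof (rule Bochner_Integration.integrable_bound)
  show "integrable lborel (\<lambda>v. norm u * (g v + g v * (norm v)\<^sup>2))"
    using integrable_density integrable_second_moment by auto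
  have "norm (g v * (u \<bullet> v)) \<le> norm (norm u * (g v + g v * (norm v)\<^sup>2))" for v
  proof -
    have "2 * norm v \<le> (norm v)\<^sup>2 + 1"
      using zero_le_power2[of "norm v - 1"] by (simp add: power2_diff)
    then have "norm v \<le> 1 + (norm v)\<^sup>2"
      using norm_ge_zero[of v] by linarith
    then have "\<bar>u \<bullet> v\<bar> \<le> norm u * (1 + (norm v)\<^sup>2)"
      using Cauchy_Schwarz_ineq2[of u v] by (meson mult_left_mono norm_ge_zero order_trans)
    from mult_left_mono[OF this nonneg[of v]]
    have "g v * \<bar>u \<bullet> v\<bar> \<le> norm u * (g v + g v * (norm v)\<^sup>2)"
      by (simp add: field_simps)
    moreover have "0 \<le> norm u * (g v + g v * (norm v)\<^sup>2)"
      by (simp add: nonneg)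
    ultimately show ?thesis
      by (simp add: abs_mult nonneg)
  qed
  then show "AE v in lborel. norm (g v * (u \<bullet> v)) \<le> norm (norm u * (g v + g v * (norm v)\<^sup>2))"
    by (rule AE_I2)
qed measurable

lemma cos_transform_ge: "1 - m2 / 2 * (norm \<xi>)\<^sup>2 \<le> cos_transform g \<xi>"
proof -
  have "(LINT v|lborel. g v - (norm \<xi>)\<^sup>2 / 2 * (g v * (norm v)\<^sup>2)) \<le> (LINT v|lborel. g v * cos (\<xi> \<bullet> v))"
  proof (rule integral_mono)
    show "integrable lborel (\<lambda>v. g v - (norm \<xi>)\<^sup>2 / 2 * (g v * (norm v)\<^sup>2))"
      using integrable_density integrable_second_moment by simp
    fix v
    have "1 - (norm \<xi>)\<^sup>2 * (norm v)\<^sup>2 / 2 \<le> cos (\<xi> \<bullet> v)"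
      using one_minus_cos_le[of "\<xi> \<bullet> v"] inner_square_le[of \<xi> v] by linarith
    from mult_left_mono[OF this nonneg[of v]]
    show "g v - (norm \<xi>)\<^sup>2 / 2 * (g v * (norm v)\<^sup>2) \<le> g v * cos (\<xi> \<bullet> v)"
      by (simp add: algebra_simps)
  qed (rule integrable_cos)
  moreover have "(LINT v|lborel. g v - (norm \<xi>)\<^sup>2 / 2 * (g v * (norm v)\<^sup>2)) = 1 - m2 / 2 * (norm \<xi>)\<^sup>2"
    using integrable_density integrable_second_moment by (simp add: total_mass second_moment)
  ultimately show ?thesis
    by (simp add: cos_transform_def)
qed

lemma abs_sin_transform_le: "\<bar>sin_transform g \<xi>\<bar> \<le> m2 / 2 * (norm \<xi>)\<^sup>2"
proof -
  have "sin_transform g \<xi> = (LINT v|lborel. g v * (sin (\<xi> \<bullet> v) - \<xi> \<bullet> v))"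
    using integrable_sin integrable_first_moment mean_zero by (simp add: sin_transform_def right_diff_distrib)
  also have "\<bar>\<dots>\<bar> \<le> (LINT v|lborel. (norm \<xi>)\<^sup>2 / 2 * (g v * (norm v)\<^sup>2))"
  proof (rule integral_abs_bound_integral)
    show "integrable lborel (\<lambda>v. g v * (sin (\<xi> \<bullet> v) - \<xi> \<bullet> v))"
      using integrable_sin integrable_first_moment by (simp add: right_diff_distrib)
    show "integrable lborel (\<lambda>v. (norm \<xi>)\<^sup>2 / 2 * (g v * (norm v)\<^sup>2))"
      using integrable_second_moment by simp
    fix v
    have "\<bar>sin (\<xi> \<bullet> v) - \<xi> \<bullet> v\<bar> \<le> (norm \<xi>)\<^sup>2 * (norm v)\<^sup>2 / 2"
      using abs_sin_minus_le[of "\<xi> \<bullet> v"] inner_square_le[of \<xi> v] by linarith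
    from mult_left_mono[OF this nonneg[of v]]
    show "\<bar>g v * (sin (\<xi> \<bullet> v) - \<xi> \<bullet> v)\<bar> \<le> (norm \<xi>)\<^sup>2 / 2 * (g v * (norm v)\<^sup>2)"
      by (simp add: abs_mult nonneg mult_ac)
  qed
  also have "\<dots> = m2 / 2 * (norm \<xi>)\<^sup>2"
    using second_moment by simp
  finally show ?thesis .
qed

lemma mass_in_cball_ge:
  assumes "\<rho> > 0"
  shows "1 - m2 / \<rho>\<^sup>2 \<le> (LINT v|lborel. g v * indicator (cball 0 \<rho>) v)"
proof -
  have int_ball: "integrable lborel (\<lambda>v. g v * indicator (cball 0 \<rho>) v)"
    by (rule integrable_mult_bounded[OF integrable_density]) (auto simp: indicator_def)
  have "(LINT v|lborel. g v) \<le> (LINT v|lborel. g v * indicator (cball 0 \<rho>) v + g v * (norm v)\<^sup>2 / \<rho>\<^sup>2)"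
  proof (rule integral_mono)
    show "integrable lborel (\<lambda>v. g v * indicator (cball 0 \<rho>) v + g v * (norm v)\<^sup>2 / \<rho>\<^sup>2)"
      using int_ball integrable_second_moment by simp
    fix v
    show "g v \<le> g v * indicator (cball 0 \<rho>) v + g v * (norm v)\<^sup>2 / \<rho>\<^sup>2"
    proof (cases "v \<in> cball 0 \<rho>")
      case False
      then have "1 \<le> (norm v)\<^sup>2 / \<rho>\<^sup>2"
        using assms by (simp add: power_mono)
      from mult_left_mono[OF this nonneg[of v]] False show ?thesis
        by simp
    qed (simp add: nonneg)
  qed (rule integrable_density)
  then show ?thesis
    using int_ball integrable_second_moment total_mass second_moment by simp
qed

lemma cos_sin_transform_sq_le_near_0:
  assumes "0 < \<rho>" "m2 < \<rho>\<^sup>2" "0 < p"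
    and p: "\<And>u. p * (norm u)\<^sup>2 \<le> truncated_second_moment g \<rho> u"
    and "norm \<xi> * \<rho> \<le> 1" "m2\<^sup>2 * (norm \<xi>)\<^sup>2 \<le> p / 8"
  shows "(cos_transform g \<xi>)\<^sup>2 + (sin_transform g \<xi>)\<^sup>2 \<le> 1 - p / 8 * (norm \<xi>)\<^sup>2"
proof -
  define s where "s = (norm \<xi>)\<^sup>2"
  have "0 \<le> s"
    by (simp add: s_def)
  have "s * \<rho>\<^sup>2 \<le> 1"
    using power_le_one[of "norm \<xi> * \<rho>" 2] \<open>0 < \<rho>\<close> \<open>norm \<xi> * \<rho> \<le> 1\<close>
    by (simp add: s_def power_mult_distrib)
  have "(m2\<^sup>2 * s) * s \<le> p / 8 * s"
    using \<open>m2\<^sup>2 * (norm \<xi>)\<^sup>2 \<le> p / 8\<close> \<open>0 \<le> s\<close> unfolding s_def by (rule mult_right_mono)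
  have "(sin_transform g \<xi>)\<^sup>2 \<le> (m2 / 2 * s)\<^sup>2"
    using power_mono[OF abs_sin_transform_le[of \<xi>] abs_ge_zero, of 2] by (simp add: s_def)
  also have "\<dots> = (m2\<^sup>2 * s) * s / 4"
    by (simp add: power2_eq_square)
  also have "\<dots> \<le> p / 32 * s"
    using \<open>(m2\<^sup>2 * s) * s \<le> p / 8 * s\<close> by (simp add: mult_ac)
  finally have S_sq: "(sin_transform g \<xi>)\<^sup>2 \<le> p / 32 * s" .
  have "m2 * s \<le> \<rho>\<^sup>2 * s"
    using \<open>m2 < \<rho>\<^sup>2\<close> \<open>0 \<le> s\<close> by (intro mult_right_mono) auto
  then have "0 \<le> cos_transform g \<xi>"
    using cos_transform_ge[of \<xi>] \<open>s * \<rho>\<^sup>2 \<le> 1\<close> by (simp add: s_def algebra_simps)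
  moreover have C_upper: "cos_transform g \<xi> \<le> 1 - p / 4 * s"
    using cos_transform_le[OF \<open>norm \<xi> * \<rho> \<le> 1\<close>] p[of \<xi>] by (simp add: s_def)
  moreover have "0 \<le> p * s"
    using \<open>0 < p\<close> \<open>0 \<le> s\<close> by simp
  ultimately have "(cos_transform g \<xi>)\<^sup>2 \<le> cos_transform g \<xi>"
    by (simp add: power2_eq_square mult_left_le)
  with S_sq C_upper \<open>0 \<le> p * s\<close> show ?thesis
    by (simp add: s_def)
qed

lemma cos_sin_transform_sq_le_quadratic:
  "\<exists>\<delta>>0. \<exists>c>0. \<forall>\<xi>. norm \<xi> \<le> \<delta> \<longrightarrow>
     (cos_transform g \<xi>)\<^sup>2 + (sin_transform g \<xi>)\<^sup>2 \<le> 1 - c * (norm \<xi>)\<^sup>2"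
proof -
  \<comment> \<open>Any radius with \<open>\<rho>\<^sup>2 > m2\<close> keeps positive mass in the ball, by Chebyshev.\<close>
  define \<rho> where "\<rho> = sqrt m2 + 1"
  have "0 \<le> sqrt m2"
    using second_moment_nonneg by simp
  then have "\<rho> > 0"
    by (simp add: \<rho>_def add_nonneg_pos)
  have "\<rho>\<^sup>2 = m2 + 2 * sqrt m2 + 1"
    using second_moment_nonneg by (simp add: \<rho>_def power2_sum)
  then have "m2 < \<rho>\<^sup>2"
    using \<open>0 \<le> sqrt m2\<close> by linarith
  then have "0 < 1 - m2 / \<rho>\<^sup>2"
    using \<open>\<rho> > 0\<close> by (simp add: field_simps)
  then have "0 < (LINT v|lborel. g v * indicator (cball 0 \<rho>) v)"
    using mass_in_cball_ge[OF \<open>\<rho> > 0\<close>] by linarith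
  then obtain p where "p > 0" and p: "\<And>u. p * (norm u)\<^sup>2 \<le> truncated_second_moment g \<rho> u"
    using truncated_second_moment_ge by blast
  define q where "q = p / 8 / (1 + m2\<^sup>2)"
  have "0 < 1 + m2\<^sup>2"
    by (simp add: add_pos_nonneg)
  then have "q > 0"
    using \<open>p > 0\<close> by (simp add: q_def)
  define \<delta> where "\<delta> = min (1 / \<rho>) (sqrt q)"
  have "\<delta> > 0"
    using \<open>\<rho> > 0\<close> \<open>q > 0\<close> by (simp add: \<delta>_def)
  have "(cos_transform g \<xi>)\<^sup>2 + (sin_transform g \<xi>)\<^sup>2 \<le> 1 - p / 8 * (norm \<xi>)\<^sup>2"
    if "norm \<xi> \<le> \<delta>" for \<xi>
  proof (rule cos_sin_transform_sq_le_near_0[OF \<open>\<rho> > 0\<close> \<open>m2 < \<rho>\<^sup>2\<close> \<open>p > 0\<close> p])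
    show "norm \<xi> * \<rho> \<le> 1"
      using that \<open>\<rho> > 0\<close> by (simp add: \<delta>_def field_simps)
    have "(norm \<xi>)\<^sup>2 \<le> (sqrt q)\<^sup>2"
      using that unfolding \<delta>_def by (intro power_mono) auto
    then have "(norm \<xi>)\<^sup>2 \<le> q"
      using \<open>q > 0\<close> by simp
    then have "(norm \<xi>)\<^sup>2 * (1 + m2\<^sup>2) \<le> p / 8"
      unfolding q_def pos_le_divide_eq[OF \<open>0 < 1 + m2\<^sup>2\<close>] .
    moreover have "m2\<^sup>2 * (norm \<xi>)\<^sup>2 \<le> (norm \<xi>)\<^sup>2 * (1 + m2\<^sup>2)"
      by (simp add: algebra_simps)
    ultimately show "m2\<^sup>2 * (norm \<xi>)\<^sup>2 \<le> p / 8"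
      by linarith
  qed
  moreover have "p / 8 > 0"
    using \<open>p > 0\<close> by simp
  ultimately show ?thesis
    using \<open>\<delta> > 0\<close> by blast
qed

lemma cos_sin_transform_gaussian_bound_on_ball:
  assumes "R > 0"
  shows "\<exists>K>0. \<forall>\<xi>. norm \<xi> < R \<longrightarrow>
    sqrt ((cos_transform g \<xi>)\<^sup>2 + (sin_transform g \<xi>)\<^sup>2) \<le> exp (- K * (norm \<xi>)\<^sup>2)"
proof -
  obtain \<delta> c where "\<delta> > 0" "c > 0" and near_0:
    "\<And>\<xi>. norm \<xi> \<le> \<delta> \<Longrightarrow> (cos_transform g \<xi>)\<^sup>2 + (sin_transform g \<xi>)\<^sup>2 \<le> 1 - c * (norm \<xi>)\<^sup>2"
    using cos_sin_transform_sq_le_quadratic by blast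
  show ?thesis
  proof (rule gaussian_bound_on_ball)
    show "continuous_on UNIV (\<lambda>\<xi>. sqrt ((cos_transform g \<xi>)\<^sup>2 + (sin_transform g \<xi>)\<^sup>2))"
      by (intro continuous_intros continuous_cos_transform continuous_sin_transform)
    show "sqrt ((cos_transform g \<xi>)\<^sup>2 + (sin_transform g \<xi>)\<^sup>2) < 1" if "\<xi> \<noteq> 0" for \<xi>
      using cos_sin_transform_sq_less_1[OF that] by simp
    show "sqrt ((cos_transform g \<xi>)\<^sup>2 + (sin_transform g \<xi>)\<^sup>2) \<le> exp (- (c / 2) * (norm \<xi>)\<^sup>2)"
      if "norm \<xi> \<le> \<delta>" for \<xi>
      using order_trans[OF real_sqrt_le_mono[OF near_0[OF that]] sqrt_one_minus_le_exp_half]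
      by simp
  qed (use \<open>\<delta> > 0\<close> \<open>c > 0\<close> assms in auto)
qed

end

lemma mean_zero_of_components:
  fixes g :: "real^'n \<Rightarrow> real"
  assumes "\<And>i. integrable lborel (\<lambda>v. g v * v $ i)" "\<And>i. (LINT v|lborel. g v * v $ i) = 0"
  shows "(LINT v|lborel. g v * (u \<bullet> v)) = 0"
proof -
  have "(\<lambda>v. g v * (u \<bullet> v)) = (\<lambda>v. \<Sum>i\<in>UNIV. u $ i * (g v * v $ i))"
    by (simp add: fun_eq_iff inner_vec_def sum_distrib_left algebra_simps)
  then show ?thesis
    using assms by simp
qed

theorem proposition10:
  fixes g :: "real^3 \<Rightarrow> real" and \<phi> :: "real \<Rightarrow> real" and K1 K2 :: real
  assumes g_nonneg: "\<And>v. g v \<ge> 0"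
    and g_int: "integrable lborel g"
    and g_mass: "(LINT v|lborel. g v) = 1"
    and g_mom1_int: "\<And>i. integrable lborel (\<lambda>v. g v * v $ i)"
    and g_mom1: "\<And>i. (LINT v|lborel. g v * v $ i) = 0"
    and g_mom2_int: "integrable lborel (\<lambda>v. g v * (norm v)\<^sup>2)"
    and g_mom2: "(LINT v|lborel. g v * (norm v)\<^sup>2) = 3"
    and K1: "K1 \<ge> 1" and K2: "K2 > 0"
    and \<phi>_nonneg: "\<And>t. t \<ge> 0 \<Longrightarrow> \<phi> t \<ge> 0"
    and \<phi>_lim: "filterlim \<phi> at_top at_top"
    and decay: "\<And>\<xi>. norm (fourier3 g \<xi>) \<le> K1 * exp (- K2 * \<phi> (norm \<xi>))"
  shows "\<exists>\<eta>>0. \<forall>R>\<eta>. \<exists>K>0.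
           (\<forall>\<xi>. norm \<xi> < R \<longrightarrow> norm (fourier3 g \<xi>) \<le> exp (- K * (norm \<xi>)\<^sup>2)) \<and>
           (\<forall>\<xi>. norm \<xi> \<ge> R \<longrightarrow> norm (fourier3 g \<xi>) \<le> exp (- K * \<phi> (norm \<xi>)))"
proof -
  interpret centred_density g 3
    using g_nonneg g_int g_mass g_mom2_int g_mom2 mean_zero_of_components[OF g_mom1_int g_mom1]
    by unfold_locales auto
  obtain T where T: "\<And>t. t \<ge> T \<Longrightarrow> K1 * exp (- K2 * \<phi> t) \<le> exp (- (K2 / 2) * \<phi> t)"
    using eventually_mult_exp_le_exp_half[of K1 K2 \<phi>] K1 K2 \<phi>_lim
    by (auto simp: eventually_at_top_linorder)
  have "\<exists>K>0. (\<forall>\<xi>. norm \<xi> < R \<longrightarrow> norm (fourier3 g \<xi>) \<le> exp (- K * (norm \<xi>)\<^sup>2)) \<and>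
      (\<forall>\<xi>. norm \<xi> \<ge> R \<longrightarrow> norm (fourier3 g \<xi>) \<le> exp (- K * \<phi> (norm \<xi>)))"
    if R: "max T 1 < R" for R
  proof -
    obtain K' where "K' > 0" and ball: "\<And>\<xi>. norm \<xi> < R \<Longrightarrow> norm (fourier3 g \<xi>) \<le> exp (- K' * (norm \<xi>)\<^sup>2)"
      using cos_sin_transform_gaussian_bound_on_ball[of R] R by (auto simp: norm_fourier3[OF g_int])
    define K where "K = min K' (K2 / 2)"
    have "K \<le> K'" "K \<le> K2 / 2"
      by (simp_all add: K_def)
    have "norm (fourier3 g \<xi>) \<le> exp (- K * (norm \<xi>)\<^sup>2)" if "norm \<xi> < R" for \<xi>
      using ball[OF that] by (rule order_trans) (simp add: \<open>K \<le> K'\<close> mult_right_mono)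
    moreover have "norm (fourier3 g \<xi>) \<le> exp (- K * \<phi> (norm \<xi>))" if "norm \<xi> \<ge> R" for \<xi>
    proof -
      have "norm (fourier3 g \<xi>) \<le> exp (- (K2 / 2) * \<phi> (norm \<xi>))"
        using decay[of \<xi>] T[of "norm \<xi>"] that R by simp
      also have "\<dots> \<le> exp (- K * \<phi> (norm \<xi>))"
        using mult_right_mono[OF \<open>K \<le> K2 / 2\<close> \<phi>_nonneg[of "norm \<xi>"]] by simp
      finally show ?thesis .
    qed
    moreover have "K > 0"
      using \<open>K' > 0\<close> K2 by (simp add: K_def)
    ultimately show ?thesis
      by blast
  qed
  then show ?thesis
    by (intro exI[of _ "max T 1"]) auto
qed

end
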